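(* In the upper half-plane model of $\mathbb{H}^2$, let $B_i=B(c_i,r_i)$, $i\in\mathbb{N}$, be pairwise disjoint closed Euclidean disks with centers $c_i\in\mathbb{Z}\subset\mathbb{R}$ and radii $r_i\le1$, with $|c_i-c_j|>1$ for $i\ne j$, let $h_i$ be the inversion in $\partial B_i$, and $C_i=\partial B_i\cap\mathbb{H}^2$. Fix $k\in\mathbb{N}_0$; for $n\ge1$ let $I_{k,n}$ be the set of multi-indices $\underline{i}=(i_1,\dots,i_n)$ with all $i_m>k$ and $i_m\ne i_{m+1}$, and let $r_{\underline{i}}$ be the Euclidean radius of the semicircle $h_{i_1}\circ\cdots\circ h_{i_{n-1}}(C_{i_n})$. Let $\alpha>0$. If $$\sum_{i\ne j,\ i>k,\ j>k}\left(\frac{1}{|c_i-c_j|-1}\right)^{2\alpha}\le1,$$ then for every $n\ge2$, $$\sum_{\underline{i}\in I_{k,n}}r_{\underline{i}}^{\alpha}\le\sum_{\underline{j}\in I_{k,n-1}}r_{\underline{j}}^{\alpha}.$$ *)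

theory Defs
  imports "HOL-Analysis.Analysis"
begin

definition upper_half :: "complex set" where
  "upper_half = {z. Im z > 0}"

definition inversion :: "real \<Rightarrow> real \<Rightarrow> complex \<Rightarrow> complex" where
  "inversion c r z = complex_of_real c + complex_of_real (r^2) / cnj (z - complex_of_real c)"

definition semicircle :: "real \<Rightarrow> real \<Rightarrow> complex set" where
  "semicircle c r = sphere (complex_of_real c) r \<inter> upper_half"

definition semicircle_radius :: "complex set \<Rightarrow> real" where
  "semicircle_radius S = (THE r. r > 0 \<and> (\<exists>c. S = semicircle c r))"

definition multi_indices :: "nat \<Rightarrow> nat \<Rightarrow> nat list set" where
  "multi_indices k n = {is. length is = n \<and> (\<forall>m\<in>set is. m > k) \<and>
                            (\<forall>m. Suc m < n \<longrightarrow> is ! m \<noteq> is ! Suc m)}"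

definition comp_inversions :: "(nat \<Rightarrow> int) \<Rightarrow> (nat \<Rightarrow> real) \<Rightarrow> nat list \<Rightarrow> complex \<Rightarrow> complex" where
  "comp_inversions c r is = foldr (\<lambda>i f. inversion (of_int (c i)) (r i) \<circ> f) is id"

definition multi_radius :: "(nat \<Rightarrow> int) \<Rightarrow> (nat \<Rightarrow> real) \<Rightarrow> nat list \<Rightarrow> real" where
  "multi_radius c r is = semicircle_radius
      (comp_inversions c r (butlast is) ` semicircle (of_int (c (last is))) (r (last is)))"

end

theory Submission
  imports Defs
begin

text \<open>A semicircle orthogonal to the real axis is encoded by its centre a and radius p.
  Inversion in a circle (c, R) far enough from it maps it to another such semicircle and
  preserves the inversive distance ((a - b)^2 - p^2 - q^2) / (2 p q) of two of them;
  two semicircles are nested iff their inversive distance is at most -1.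
  For a word i_1 ... i_n, the semicircles C_{i_{n-1}} and h_{i_{n-1}}(C_{i_n}) are nested,
  with inversive distance at most 1 - D^2/2 where D = |c_{i_{n-1}} - c_{i_n}| \<ge> 2.
  Applying h_{i_{n-2}}, ..., h_{i_1} keeps the pair nested with the same inversive distance,
  because consecutive disks are disjoint; the images have radii r_{i_1...i_{n-1}} and
  r_{i_1...i_n}. A nested pair with that inversive distance has radius ratio at most
  (D - 1)^-2, so r_{i_1...i_n}^\<alpha> \<le> r_{i_1...i_{n-1}}^\<alpha> (D - 1)^(-2\<alpha>), and summing over
  i_n with the hypothesis on the weights gives the claim.\<close>

section \<open>Semicircles and inversions\<close>

lemma mem_semicircle_iff:
  assumes "p > 0"
  shows "z \<in> semicircle a p \<longleftrightarrow> Im z > 0 \<and> (Re z - a)^2 + (Im z)^2 = p^2"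
proof -
  have "dist (complex_of_real a) z = sqrt ((Re z - a)^2 + (Im z)^2)"
    by (simp add: dist_norm cmod_def power2_commute)
  then show ?thesis
    using assms by (auto simp: semicircle_def upper_half_def real_sqrt_unique)
qed

lemma semicircle_radius_semicircle [simp]:
  assumes "p > 0"
  shows "semicircle_radius (semicircle a p) = p"
  unfolding semicircle_radius_def
proof (rule the_equality)
  show "p > 0 \<and> (\<exists>b. semicircle a p = semicircle b p)"
    using assms by auto
next
  fix q assume "q > 0 \<and> (\<exists>b. semicircle a p = semicircle b q)"
  then obtain b where q: "q > 0" and eq: "semicircle a p = semicircle b q"
    by auto
  have "Complex a p \<in> semicircle b q"
    using assms by (simp add: mem_semicircle_iff flip: eq)
  moreover have "Complex b q \<in> semicircle a p"
    using q by (simp add: mem_semicircle_iff eq)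
  ultimately have "(a - b)^2 + p^2 = q^2" and "(b - a)^2 + q^2 = p^2"
    using assms q by (simp_all add: mem_semicircle_iff)
  then have "p^2 = q^2"
    by (simp add: power2_commute)
  then show "q = p"
    using assms q by simp
qed

lemma Re_inversion: "Re (inversion c R z) = c + R^2 * (Re z - c) / ((Re z - c)^2 + (Im z)^2)"
  and Im_inversion: "Im (inversion c R z) = R^2 * Im z / ((Re z - c)^2 + (Im z)^2)"
  by (simp_all add: inversion_def Re_divide Im_divide power2_eq_square)

lemma inversion_inversion:
  assumes "z \<noteq> complex_of_real c" "R \<noteq> 0"
  shows "inversion c R (inversion c R z) = z"
  using assms by (simp add: inversion_def field_simps)

lemma Im_inversion_pos:
  assumes "Im z > 0" "R \<noteq> 0"
  shows "Im (inversion c R z) > 0"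
  using assms by (simp add: Im_inversion add_nonneg_pos)

definition inv_center :: "real \<Rightarrow> real \<Rightarrow> real \<Rightarrow> real \<Rightarrow> real" where
  "inv_center c R a p = c + R^2 * (a - c) / ((a - c)^2 - p^2)"

definition inv_radius :: "real \<Rightarrow> real \<Rightarrow> real \<Rightarrow> real \<Rightarrow> real" where
  "inv_radius c R a p = R^2 * p / ((a - c)^2 - p^2)"

lemma inversion_circle_equation:
  assumes z: "Im z > 0" and E: "(a - c)^2 \<noteq> p^2"
  shows "(Re (inversion c R z) - inv_center c R a p)^2 + (Im (inversion c R z))^2
           - (inv_radius c R a p)^2
         = R^4 / (((a - c)^2 - p^2) * ((Re z - c)^2 + (Im z)^2))
             * ((Re z - a)^2 + (Im z)^2 - p^2)"
proof -
  define x y e where "x = Re z - c" and "y = Im z" and "e = a - c"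
  define S F where "S = x^2 + y^2" and "F = e^2 - p^2"
  have "S \<noteq> 0" "F \<noteq> 0"
    using z E by (auto simp: S_def F_def x_def y_def e_def)
  have key: "(x*F - e*S)^2 + y^2*F^2 - p^2*S^2 = S*F*((x - e)^2 + y^2 - p^2)"
    unfolding S_def F_def by (simp add: power2_eq_square algebra_simps)
  have "(R^2*x/S - R^2*e/F)^2 + (R^2*y/S)^2 - (R^2*p/F)^2
        = R^4 * ((x*F - e*S)^2 + y^2*F^2 - p^2*S^2) / (S^2*F^2)"
    using \<open>S \<noteq> 0\<close> \<open>F \<noteq> 0\<close> by (simp add: field_simps power2_eq_square) algebra
  also have "\<dots> = R^4 / (F*S) * ((x - e)^2 + y^2 - p^2)"
    unfolding key using \<open>S \<noteq> 0\<close> \<open>F \<noteq> 0\<close> by (simp add: field_simps power2_eq_square)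
  finally have "(R^2*x/S - R^2*e/F)^2 + (R^2*y/S)^2 - (R^2*p/F)^2
        = R^4 / (F*S) * ((x - e)^2 + y^2 - p^2)" .
  moreover have "x - e = Re z - a"
    by (simp add: x_def e_def)
  ultimately show ?thesis
    by (simp add: Re_inversion Im_inversion inv_center_def inv_radius_def
        x_def y_def e_def S_def F_def)
qed

lemma inversion_mem_semicircle_iff:
  assumes z: "Im z > 0" and R: "R \<noteq> 0" and p: "p > 0" and E: "(a - c)^2 > p^2"
  shows "inversion c R z \<in> semicircle (inv_center c R a p) (inv_radius c R a p)
         \<longleftrightarrow> z \<in> semicircle a p"
proof -
  let ?w = "inversion c R z"
  have "(Re ?w - inv_center c R a p)^2 + (Im ?w)^2 - (inv_radius c R a p)^2
        = R^4 / (((a - c)^2 - p^2) * ((Re z - c)^2 + (Im z)^2)) * ((Re z - a)^2 + (Im z)^2 - p^2)"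
    using E by (intro inversion_circle_equation[OF z]) simp
  moreover have "R^4 / (((a - c)^2 - p^2) * ((Re z - c)^2 + (Im z)^2)) \<noteq> 0"
    using z R E by (simp add: add_nonneg_pos)
  ultimately have "(Re ?w - inv_center c R a p)^2 + (Im ?w)^2 - (inv_radius c R a p)^2 = 0
             \<longleftrightarrow> (Re z - a)^2 + (Im z)^2 - p^2 = 0"
    by (metis mult_eq_0_iff)
  moreover have "inv_radius c R a p > 0"
    using R p E by (simp add: inv_radius_def)
  ultimately show ?thesis
    using Im_inversion_pos[OF z R] z p by (simp add: mem_semicircle_iff)
qed

lemma inversion_image_semicircle:
  assumes R: "R \<noteq> 0" and p: "p > 0" and E: "(a - c)^2 > p^2"
  shows "inversion c R ` semicircle a p = semicircle (inv_center c R a p) (inv_radius c R a p)"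
    (is "_ = ?S")
proof (intro equalityI subsetI)
  fix w assume "w \<in> inversion c R ` semicircle a p"
  then show "w \<in> ?S"
    using inversion_mem_semicircle_iff[OF _ R p E] p by (auto simp: mem_semicircle_iff)
next
  fix w assume w: "w \<in> ?S"
  have "inv_radius c R a p > 0"
    using R p E by (simp add: inv_radius_def)
  then have "Im w > 0"
    using w by (simp add: mem_semicircle_iff)
  then have z: "Im (inversion c R w) > 0"
    using R by (rule Im_inversion_pos)
  have "w \<noteq> complex_of_real c"
    using \<open>Im w > 0\<close> by auto
  then have invol: "inversion c R (inversion c R w) = w"
    using R by (rule inversion_inversion)
  have "inversion c R w \<in> semicircle a p"
    using inversion_mem_semicircle_iff[OF z R p E] w invol by simp
  with invol show "w \<in> inversion c R ` semicircle a p"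
    by (metis image_eqI)
qed

section \<open>Inversive distance\<close>

definition inversive_distance :: "real \<Rightarrow> real \<Rightarrow> real \<Rightarrow> real \<Rightarrow> real" where
  "inversive_distance a p b q = ((a - b)^2 - p^2 - q^2) / (2 * p * q)"

lemma inversive_distance_inversion:
  assumes R: "R \<noteq> 0" and "p \<noteq> 0" "q \<noteq> 0" "(a - c)^2 \<noteq> p^2" "(b - c)^2 \<noteq> q^2"
  shows "inversive_distance (inv_center c R a p) (inv_radius c R a p)
           (inv_center c R b q) (inv_radius c R b q) = inversive_distance a p b q"
proof -
  define e f where "e = a - c" and "f = b - c"
  define F G where "F = e^2 - p^2" and "G = f^2 - q^2"
  have "F \<noteq> 0" "G \<noteq> 0"
    using assms by (auto simp: F_def G_def e_def f_def)
  have key: "(e*G - f*F)^2 - p^2*G^2 - q^2*F^2 = F*G*((e - f)^2 - p^2 - q^2)"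
    unfolding F_def G_def by (simp add: power2_eq_square algebra_simps)
  have "(R^2*e/F - R^2*f/G)^2 - (R^2*p/F)^2 - (R^2*q/G)^2
          = R^4 * ((e*G - f*F)^2 - p^2*G^2 - q^2*F^2) / (F^2*G^2)"
    using \<open>F \<noteq> 0\<close> \<open>G \<noteq> 0\<close> by (simp add: field_simps power2_eq_square) algebra
  also have "\<dots> = R^4 / (F*G) * ((e - f)^2 - p^2 - q^2)"
    unfolding key using \<open>F \<noteq> 0\<close> \<open>G \<noteq> 0\<close> by (simp add: field_simps power2_eq_square)
  finally have num: "(R^2*e/F - R^2*f/G)^2 - (R^2*p/F)^2 - (R^2*q/G)^2
                     = R^4 / (F*G) * ((e - f)^2 - p^2 - q^2)" .
  have den: "2 * (R^2*p/F) * (R^2*q/G) = R^4 / (F*G) * (2 * p * q)"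
    by (simp add: field_simps power2_eq_square power4_eq_xxxx)
  have "R^4 / (F*G) \<noteq> 0"
    using R \<open>F \<noteq> 0\<close> \<open>G \<noteq> 0\<close> by simp
  have "inversive_distance (inv_center c R a p) (inv_radius c R a p)
          (inv_center c R b q) (inv_radius c R b q)
        = ((R^2*e/F - R^2*f/G)^2 - (R^2*p/F)^2 - (R^2*q/G)^2) / (2 * (R^2*p/F) * (R^2*q/G))"
    by (simp add: inversive_distance_def inv_center_def inv_radius_def e_def f_def F_def G_def)
  also have "\<dots> = (R^4 / (F*G) * ((e - f)^2 - p^2 - q^2)) / (R^4 / (F*G) * (2 * p * q))"
    by (simp only: num den)
  also have "\<dots> = inversive_distance a p b q"
    using \<open>R^4 / (F*G) \<noteq> 0\<close> by (simp add: inversive_distance_def e_def f_def)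
  finally show ?thesis .
qed

lemma nested_iff_inversive_distance:
  assumes "p > 0" "q > 0"
  shows "(a - b)^2 \<le> (p - q)^2 \<longleftrightarrow> inversive_distance a p b q \<le> -1"
proof -
  have "inversive_distance a p b q \<le> -1 \<longleftrightarrow> (a - b)^2 - p^2 - q^2 \<le> -(2 * p * q)"
    unfolding inversive_distance_def using assms by (simp add: pos_divide_le_eq)
  also have "\<dots> \<longleftrightarrow> (a - b)^2 \<le> (p - q)^2"
    by (simp add: power2_eq_square algebra_simps)
  finally show ?thesis ..
qed

text \<open>Inversion in a circle maps it to itself with inside and outside exchanged.\<close>

lemma inversive_distance_inversion_self:
  assumes "p \<noteq> 0" "q \<noteq> 0" "(b - a)^2 \<noteq> q^2"
  shows "inversive_distance a p (inv_center a p b q) (inv_radius a p b q)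
         = - inversive_distance a p b q"
proof -
  define E where "E = (b - a)^2 - q^2"
  have "E \<noteq> 0"
    using assms by (simp add: E_def)
  have "(p^2*(b - a)/E)^2 - p^2 - (p^2*q/E)^2 = p^4 * ((b - a)^2 - q^2) / E^2 - p^2"
    by (simp add: field_simps power2_eq_square) algebra
  also have "\<dots> = p^2 * (p^2 - E) / E"
    using \<open>E \<noteq> 0\<close> unfolding E_def[symmetric] by (simp add: field_simps power2_eq_square power4_eq_xxxx)
  finally have num: "(p^2*(b - a)/E)^2 - p^2 - (p^2*q/E)^2 = p^2 * (p^2 - E) / E" .
  have "inversive_distance a p (inv_center a p b q) (inv_radius a p b q)
        = ((p^2*(b - a)/E)^2 - p^2 - (p^2*q/E)^2) / (2 * p * (p^2*q/E))"
    by (simp add: inversive_distance_def inv_center_def inv_radius_def E_def power2_commute)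
  also have "\<dots> = (p^2 - E) / (2 * p * q)"
    unfolding num using assms \<open>E \<noteq> 0\<close> by (simp add: field_simps power2_eq_square)
  also have "\<dots> = - inversive_distance a p b q"
    unfolding inversive_distance_def E_def minus_divide_left by (simp add: power2_commute)
  finally show ?thesis .
qed

lemma inversive_distance_lower_bound:
  assumes "0 < p" "p \<le> 1" "0 < q" "q \<le> 1" "1 \<le> (a - b)^2"
  shows "(a - b)^2 / 2 - 1 \<le> inversive_distance a p b q"
proof -
  have "p * p \<le> 1" "q * q \<le> 1"
    using assms by (simp_all add: mult_le_one)
  moreover have "p * p \<le> p * q \<or> q * q \<le> p * q"
    using assms by (cases "p \<le> q") (simp_all add: mult_left_mono mult_right_mono)
  ultimately have "(p - q)^2 \<le> 1 - p * q"
    by (auto simp: power2_eq_square algebra_simps)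
  also have "\<dots> \<le> (a - b)^2 * (1 - p * q)"
    using mult_right_mono[of 1 "(a - b)^2" "1 - p * q"] mult_le_one[of p q] assms by simp
  finally have "((a - b)^2 - 2) * (p * q) \<le> (a - b)^2 - p^2 - q^2"
    by (simp add: power2_eq_square algebra_simps)
  then show ?thesis
    using assms by (simp add: inversive_distance_def le_divide_eq field_simps)
qed

lemma nested_radius_le:
  assumes q: "0 < q" "q < p" and D: "2 \<le> D"
    and delta: "inversive_distance a p b q \<le> 1 - D^2 / 2"
  shows "q \<le> p / (D - 1)^2"
proof -
  define s where "s = D - 1"
  have s: "1 \<le> s" "D^2 - 2 = s^2 + 2 * s - 1"
    using D by (simp_all add: s_def power2_eq_square algebra_simps)
  have "1 / s^2 \<le> 1"
    using s by simp
  then have coeff: "s^2 + 1 / s^2 \<le> D^2 - 2"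
    using s by linarith
  have "(a - b)^2 - p^2 - q^2 \<le> (1 - D^2 / 2) * (2 * p * q)"
    using delta q by (simp add: inversive_distance_def divide_le_eq)
  then have "(D^2 - 2) * (p * q) \<le> p^2 + q^2 - (a - b)^2"
    by (simp add: algebra_simps)
  then have "(D^2 - 2) * (p * q) \<le> p^2 + q^2"
    using zero_le_power2[of "a - b"] by linarith
  moreover have "(s^2 + 1 / s^2) * (p * q) \<le> (D^2 - 2) * (p * q)"
    using coeff q by (intro mult_right_mono) auto
  moreover have "(q - p / s^2) * (q - p * s^2) = p^2 + q^2 - (s^2 + 1 / s^2) * (p * q)"
    using s by (simp add: field_simps power2_eq_square)
  \<comment> \<open>so \<open>q / p\<close> lies outside the open interval between the roots \<open>s\<^sup>-\<^sup>2\<close> and \<open>s\<^sup>2\<close>\<close>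
  ultimately have "0 \<le> (q - p / s^2) * (q - p * s^2)"
    by linarith
  moreover have "p * 1 \<le> p * s^2"
    using q s by (intro mult_left_mono) simp_all
  then have "q - p * s^2 < 0"
    using q by linarith
  ultimately have "q - p / s^2 \<le> 0"
    by (simp add: zero_le_mult_iff)
  then show ?thesis
    by (simp add: s_def)
qed

lemma inv_radius_less_if_nested:
  assumes q: "0 < q" "q < p" and nested: "(a - b)^2 \<le> (p - q)^2"
    and far: "p^2 < (a - c)^2" and R: "R \<noteq> 0"
  shows "q^2 < (b - c)^2" and "inv_radius c R b q < inv_radius c R a p"
proof -
  define x where "x = \<bar>a - c\<bar>"
  have x: "p < x"
    using far q power2_less_imp_less[of p x] by (simp add: x_def)
  have "\<bar>a - b\<bar> \<le> \<bar>p - q\<bar>"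
    using nested abs_le_square_iff by blast
  then have "\<bar>a - b\<bar> \<le> p - q"
    using q by simp
  then have "x - p + q \<le> \<bar>b - c\<bar>"
    unfolding x_def by linarith
  then have bc: "(x - p + q)^2 \<le> (b - c)^2"
    using x q power_mono[of "x - p + q" "\<bar>b - c\<bar>" 2] by simp
  have "q^2 < (x - p + q)^2"
    using x q by (intro power_strict_mono) auto
  with bc show bq: "q^2 < (b - c)^2"
    by linarith
  have "q * ((a - c)^2 - p^2) = q * (x - p) * (x + p)"
    by (simp add: x_def power2_eq_square algebra_simps flip: power2_abs)
  also have "\<dots> < p * ((x - p + q)^2 - q^2)"
  proof -
    have "0 < (p - q) * (x - p)^2"
      using q x by simp
    moreover have "p * ((x - p + q)^2 - q^2) - q * (x - p) * (x + p) = (p - q) * (x - p)^2"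
      by (simp add: power2_eq_square algebra_simps)
    ultimately show ?thesis
      by linarith
  qed
  also have "\<dots> \<le> p * ((b - c)^2 - q^2)"
    using bc q by simp
  finally have "q / ((b - c)^2 - q^2) < p / ((a - c)^2 - p^2)"
    using far bq by (simp add: field_simps)
  then have "R^2 * (q / ((b - c)^2 - q^2)) < R^2 * (p / ((a - c)^2 - p^2))"
    using R by (intro mult_strict_left_mono) auto
  then show "inv_radius c R b q < inv_radius c R a p"
    by (simp add: inv_radius_def)
qed

lemma inversion_image_in_disk:
  assumes R: "R > 0" and p: "p > 0" and far: "p + R < \<bar>a - c\<bar>"
  shows "\<bar>inv_center c R a p - c\<bar> + inv_radius c R a p \<le> R"
proof -
  have E: "(a - c)^2 - p^2 = (\<bar>a - c\<bar> - p) * (\<bar>a - c\<bar> + p)"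
    by (simp add: algebra_simps power2_eq_square)
  have pos: "\<bar>a - c\<bar> - p > 0" "\<bar>a - c\<bar> + p > 0"
    using assms by auto
  have "\<bar>inv_center c R a p - c\<bar> = R^2 * \<bar>a - c\<bar> / ((a - c)^2 - p^2)"
    unfolding inv_center_def E using pos by (simp add: abs_mult)
  then have "\<bar>inv_center c R a p - c\<bar> + inv_radius c R a p
        = R^2 * (\<bar>a - c\<bar> + p) / ((\<bar>a - c\<bar> - p) * (\<bar>a - c\<bar> + p))"
    unfolding inv_radius_def E by (simp add: add_divide_distrib algebra_simps)
  also have "\<dots> = R^2 / (\<bar>a - c\<bar> - p)"
    using pos by simp
  also have "\<dots> \<le> R^2 / R"
    using pos assms by (intro divide_left_mono) auto
  also have "\<dots> = R"
    by (simp add: power2_eq_square)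
  finally show ?thesis .
qed

section \<open>Nested semicircles along a word of inversions\<close>

lemma disjoint_cballs_imp_dist_gt:
  fixes x y :: "'a::real_normed_vector"
  assumes r: "0 < r" and s: "0 < s" and disj: "cball x r \<inter> cball y s = {}"
  shows "r + s < dist x y"
proof (rule ccontr)
  assume "\<not> r + s < dist x y"
  define z where "z = x + (r / (r + s)) *\<^sub>R (y - x)"
  have "dist x z = r / (r + s) * dist x y"
    using r s by (simp add: z_def dist_norm norm_minus_commute)
  also have "\<dots> \<le> r / (r + s) * (r + s)"
    using \<open>\<not> r + s < dist x y\<close> r s by (intro mult_left_mono) auto
  finally have "z \<in> cball x r"
    using r s by simp
  have "y - z = (1 - r / (r + s)) *\<^sub>R (y - x)"
    by (simp add: z_def algebra_simps)
  also have "1 - r / (r + s) = s / (r + s)"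
    using r s by (simp add: field_simps)
  finally have "y - z = (s / (r + s)) *\<^sub>R (y - x)" .
  then have "dist y z = s / (r + s) * dist x y"
    using r s by (simp add: dist_norm norm_minus_commute)
  also have "\<dots> \<le> s / (r + s) * (r + s)"
    using \<open>\<not> r + s < dist x y\<close> r s by (intro mult_left_mono) auto
  finally have "z \<in> cball y s"
    using r s by simp
  with \<open>z \<in> cball x r\<close> disj show False
    by blast
qed

text \<open>Semicircle \<open>(b, q)\<close> strictly inside semicircle \<open>(a, p)\<close>, which lies in the closed disk
  \<open>(d, \<rho>)\<close>.\<close>

definition nested_in_disk :: "real \<Rightarrow> real \<Rightarrow> real \<Rightarrow> real \<Rightarrow> real \<Rightarrow> real \<Rightarrow> bool" where
  "nested_in_disk a p b q d \<rho> \<longleftrightarrow>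
     0 < q \<and> q < p \<and> (a - b)^2 \<le> (p - q)^2 \<and> \<bar>a - d\<bar> + p \<le> \<rho>"

lemma inversion_nested_in_disk:
  assumes nest: "nested_in_disk a p b q d \<rho>" and R: "R > 0" and apart: "\<rho> + R < \<bar>d - c\<bar>"
  defines "a' \<equiv> inv_center c R a p" and "p' \<equiv> inv_radius c R a p"
    and "b' \<equiv> inv_center c R b q" and "q' \<equiv> inv_radius c R b q"
  shows "inversion c R ` semicircle a p = semicircle a' p'"
    and "inversion c R ` semicircle b q = semicircle b' q'"
    and "nested_in_disk a' p' b' q' c R"
    and "inversive_distance a' p' b' q' = inversive_distance a p b q"
proof -
  from nest have q: "0 < q" "q < p" and nested: "(a - b)^2 \<le> (p - q)^2"
    and inside: "\<bar>a - d\<bar> + p \<le> \<rho>"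
    by (auto simp: nested_in_disk_def)
  have far: "p + R < \<bar>a - c\<bar>"
    using inside apart by linarith
  then have "p < \<bar>a - c\<bar>"
    using R by linarith
  then have Ea: "p^2 < (a - c)^2"
    using q power_strict_mono[of p "\<bar>a - c\<bar>" 2] by simp
  have Eb: "q^2 < (b - c)^2" and less: "q' < p'"
    using inv_radius_less_if_nested[OF q nested Ea] R by (auto simp: p'_def q'_def)
  show "inversion c R ` semicircle a p = semicircle a' p'"
    "inversion c R ` semicircle b q = semicircle b' q'"
    using inversion_image_semicircle Ea Eb q R by (auto simp: a'_def p'_def b'_def q'_def)
  show delta: "inversive_distance a' p' b' q' = inversive_distance a p b q"
    using inversive_distance_inversion Ea Eb q R by (simp add: a'_def p'_def b'_def q'_def)
  have "0 < q'"
    using R q Eb by (simp add: q'_def inv_radius_def)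
  moreover have "(a' - b')^2 \<le> (p' - q')^2"
    using delta nested nested_iff_inversive_distance[of p q a b]
      nested_iff_inversive_distance[of p' q' a' b'] q \<open>0 < q'\<close> less by simp
  moreover have "\<bar>a' - c\<bar> + p' \<le> R"
    using inversion_image_in_disk[OF R _ far] q by (simp add: a'_def p'_def)
  ultimately show "nested_in_disk a' p' b' q' c R"
    using less by (simp add: nested_in_disk_def)
qed

lemma comp_inversions_Cons [simp]:
  "comp_inversions c r (i # is) = inversion (of_int (c i)) (r i) \<circ> comp_inversions c r is"
  by (simp add: comp_inversions_def)

lemma comp_inversions_snoc:
  "comp_inversions c r (is @ [i]) = comp_inversions c r is \<circ> inversion (of_int (c i)) (r i)"
  by (induction "is") (auto simp: comp_inversions_def)

text \<open>The induction invariant: the image pair lies in the disk of the first index of the word,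
  which is disjoint from the disk of the next inversion to be applied.\<close>

lemma comp_inversions_nested_in_disk:
  assumes "\<forall>i\<in>set is. 0 < r i"
    and "successively (\<lambda>i j. r i + r j < \<bar>real_of_int (c i) - real_of_int (c j)\<bar>) (is @ [l])"
    and "nested_in_disk a p b q (of_int (c l)) (r l)"
  shows "\<exists>a' p' b' q'. comp_inversions c r is ` semicircle a p = semicircle a' p' \<and>
           comp_inversions c r is ` semicircle b q = semicircle b' q' \<and>
           nested_in_disk a' p' b' q' (of_int (c (hd (is @ [l])))) (r (hd (is @ [l]))) \<and>
           inversive_distance a' p' b' q' = inversive_distance a p b q"
  using assms
proof (induction "is")
  case Nil
  then show ?case
    by (auto simp: comp_inversions_def)
next
  case (Cons i "is")
  let ?j = "hd (is @ [l])"
  obtain a' p' b' q' where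
    img: "comp_inversions c r is ` semicircle a p = semicircle a' p'"
         "comp_inversions c r is ` semicircle b q = semicircle b' q'" and
    nest: "nested_in_disk a' p' b' q' (of_int (c ?j)) (r ?j)" and
    delta: "inversive_distance a' p' b' q' = inversive_distance a p b q"
    using Cons by (auto simp: successively_Cons)
  have ri: "0 < r i"
    using Cons.prems(1) by simp
  have apart: "r ?j + r i < \<bar>real_of_int (c ?j) - real_of_int (c i)\<bar>"
    using Cons.prems(2) by (simp add: successively_Cons abs_minus_commute add.commute)
  note step = inversion_nested_in_disk[OF nest ri apart]
  have "comp_inversions c r (i # is) ` semicircle a p = inversion (of_int (c i)) (r i) ` semicircle a' p'"
    "comp_inversions c r (i # is) ` semicircle b q = inversion (of_int (c i)) (r i) ` semicircle b' q'"
    by (simp_all add: image_image flip: img)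
  then show ?case
    using step delta by (simp only: list.sel(1) append_Cons) blast
qed

lemma inversion_nested_in_own_disk:
  assumes p: "0 < p" "p \<le> 1" and q: "0 < q" "q \<le> 1" and D: "4 \<le> (a - b)^2"
  defines "b' \<equiv> inv_center a p b q" and "q' \<equiv> inv_radius a p b q"
  shows "inversion a p ` semicircle b q = semicircle b' q'"
    and "nested_in_disk a p b' q' a p"
    and "inversive_distance a p b' q' \<le> 1 - (a - b)^2 / 2"
proof -
  have "q^2 \<le> 1"
    using q by (simp add: power_le_one)
  then have E: "q^2 < (b - a)^2"
    using D by (simp add: power2_commute)
  show "inversion a p ` semicircle b q = semicircle b' q'"
    using inversion_image_semicircle[of p q b a] p q E by (simp add: b'_def q'_def)
  have "inversive_distance a p b' q' = - inversive_distance a p b q"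
    using inversive_distance_inversion_self p q E by (simp add: b'_def q'_def)
  also have "\<dots> \<le> 1 - (a - b)^2 / 2"
    using inversive_distance_lower_bound[OF p q, of a b] D by simp
  finally show delta: "inversive_distance a p b' q' \<le> 1 - (a - b)^2 / 2" .
  have "p * q < (b - a)^2 - q^2"
    using p q D \<open>q^2 \<le> 1\<close> mult_le_one[of p q] power2_commute[of a b] by linarith
  then have "p * (p * q) < p * ((b - a)^2 - q^2)"
    using p by simp
  then have "q' < p"
    using E by (simp add: q'_def inv_radius_def divide_less_eq power2_eq_square)
  moreover have "0 < q'"
    using p q E by (simp add: q'_def inv_radius_def)
  moreover have "inversive_distance a p b' q' \<le> -1"
    using delta D by simp
  ultimately show "nested_in_disk a p b' q' a p"
    using nested_iff_inversive_distance[of p q' a b'] p by (simp add: nested_in_disk_def)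
qed

lemma multi_radius_eqI:
  assumes "comp_inversions c r (butlast is) ` semicircle (of_int (c (last is))) (r (last is))
           = semicircle a p"
    and "p > 0"
  shows "multi_radius c r is = p"
  using assms by (simp add: multi_radius_def)

lemma multi_radius_snoc_inversive_distance:
  assumes radii: "\<forall>i\<in>set (js @ [m]). 0 < r i \<and> r i \<le> 1"
    and sep: "successively (\<lambda>i j. r i + r j < \<bar>real_of_int (c i) - real_of_int (c j)\<bar>) js"
    and "js \<noteq> []" and D: "4 \<le> (real_of_int (c (last js) - c m))^2"
  shows "\<exists>a b. 0 < multi_radius c r (js @ [m]) \<and> multi_radius c r (js @ [m]) < multi_radius c r js \<and>
           inversive_distance a (multi_radius c r js) b (multi_radius c r (js @ [m]))
             \<le> 1 - (real_of_int (c (last js) - c m))^2 / 2"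
proof -
  obtain L j where js: "js = L @ [j]"
    using \<open>js \<noteq> []\<close> by (metis rev_exhaust)
  define cj cm where "cj = real_of_int (c j)" and "cm = real_of_int (c m)"
  define b q where "b = inv_center cj (r j) cm (r m)" and "q = inv_radius cj (r j) cm (r m)"
  have "4 \<le> (cj - cm)^2"
    using D js by (simp add: cj_def cm_def)
  note base = inversion_nested_in_own_disk[OF _ _ _ _ this, of "r j" "r m"]
  have img0: "inversion cj (r j) ` semicircle cm (r m) = semicircle b q"
    and "nested_in_disk cj (r j) b q cj (r j)"
    and delta0: "inversive_distance cj (r j) b q \<le> 1 - (cj - cm)^2 / 2"
    using base radii js by (simp_all add: b_def q_def)
  then obtain a' p' b' q' where
    img: "comp_inversions c r L ` semicircle cj (r j) = semicircle a' p'"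
         "comp_inversions c r L ` semicircle b q = semicircle b' q'" and
    nest: "nested_in_disk a' p' b' q' (of_int (c (hd js))) (r (hd js))" and
    delta: "inversive_distance a' p' b' q' = inversive_distance cj (r j) b q"
    using comp_inversions_nested_in_disk[of L r c j cj "r j" b q] radii sep js
    by (auto simp: cj_def)
  have "comp_inversions c r js ` semicircle cm (r m)
        = comp_inversions c r L ` inversion cj (r j) ` semicircle cm (r m)"
    by (simp add: js comp_inversions_snoc image_comp cj_def)
  also have "\<dots> = semicircle b' q'"
    using img0 img by simp
  finally have img_m: "comp_inversions c r js ` semicircle cm (r m) = semicircle b' q'" .
  have "0 < q'" "q' < p'"
    using nest by (simp_all add: nested_in_disk_def)
  have "multi_radius c r js = p'"
    using img(1) \<open>0 < q'\<close> \<open>q' < p'\<close>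
    by (intro multi_radius_eqI[where a = a']) (simp_all add: js cj_def)
  moreover have "multi_radius c r (js @ [m]) = q'"
    using img_m \<open>0 < q'\<close> by (intro multi_radius_eqI[where a = b']) (simp_all add: cm_def)
  moreover have "inversive_distance a' p' b' q' \<le> 1 - (real_of_int (c (last js) - c m))^2 / 2"
    using delta delta0 js by (simp add: cj_def cm_def)
  ultimately show ?thesis
    using \<open>0 < q'\<close> \<open>q' < p'\<close> by blast
qed

lemma multi_radius_snoc_le:
  assumes "\<forall>i\<in>set (js @ [m]). 0 < r i \<and> r i \<le> 1"
    and "successively (\<lambda>i j. r i + r j < \<bar>real_of_int (c i) - real_of_int (c j)\<bar>) js"
    and "js \<noteq> []" and D: "2 \<le> \<bar>real_of_int (c (last js) - c m)\<bar>"
  shows "0 < multi_radius c r (js @ [m])"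
    and "multi_radius c r (js @ [m])
           \<le> multi_radius c r js / (\<bar>real_of_int (c (last js) - c m)\<bar> - 1)^2"
proof -
  have "2^2 \<le> \<bar>real_of_int (c (last js) - c m)\<bar>^2"
    using D by (intro power_mono) simp_all
  then obtain a b where "0 < multi_radius c r (js @ [m])"
      and "multi_radius c r (js @ [m]) < multi_radius c r js"
      and "inversive_distance a (multi_radius c r js) b (multi_radius c r (js @ [m]))
             \<le> 1 - \<bar>real_of_int (c (last js) - c m)\<bar>^2 / 2"
    using multi_radius_snoc_inversive_distance assms by fastforce
  then show "0 < multi_radius c r (js @ [m])"
    and "multi_radius c r (js @ [m])
           \<le> multi_radius c r js / (\<bar>real_of_int (c (last js) - c m)\<bar> - 1)^2"
    using nested_radius_le D by auto
qed

lemma multi_radius_snoc_powr_le: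
  assumes "\<forall>i\<in>set (js @ [m]). 0 < r i \<and> r i \<le> 1"
    and "successively (\<lambda>i j. r i + r j < \<bar>real_of_int (c i) - real_of_int (c j)\<bar>) js"
    and "js \<noteq> []" and D: "2 \<le> \<bar>real_of_int (c (last js) - c m)\<bar>" and "0 \<le> \<alpha>"
  shows "multi_radius c r (js @ [m]) powr \<alpha>
         \<le> multi_radius c r js powr \<alpha> * (1 / (\<bar>real_of_int (c (last js) - c m)\<bar> - 1)) powr (2 * \<alpha>)"
proof -
  define t where "t = \<bar>real_of_int (c (last js) - c m)\<bar> - 1"
  have "0 < t"
    using D by (simp add: t_def)
  have pos: "0 < multi_radius c r (js @ [m])"
    and le: "multi_radius c r (js @ [m]) \<le> multi_radius c r js / t^2"
    using multi_radius_snoc_le assms by (simp_all add: t_def)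
  then have "0 < multi_radius c r js / t^2"
    by linarith
  then have "0 \<le> multi_radius c r js"
    using \<open>0 < t\<close> by (simp add: zero_less_divide_iff)
  have "multi_radius c r (js @ [m]) powr \<alpha> \<le> (multi_radius c r js / t^2) powr \<alpha>"
    using pos le \<open>0 \<le> \<alpha>\<close> by (intro powr_mono2) auto
  also have "\<dots> = multi_radius c r js powr \<alpha> / (t^2) powr \<alpha>"
    using \<open>0 < t\<close> \<open>0 \<le> multi_radius c r js\<close> by (simp add: powr_divide)
  also have "(t^2) powr \<alpha> = t powr (2 * \<alpha>)"
    using \<open>0 < t\<close> by (simp add: powr_powr flip: powr_numeral)
  also have "multi_radius c r js powr \<alpha> / t powr (2 * \<alpha>)
             = multi_radius c r js powr \<alpha> * (1 / t) powr (2 * \<alpha>)"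
    using \<open>0 < t\<close> by (simp add: powr_divide)
  finally show ?thesis
    by (simp add: t_def)
qed

section \<open>Summation over multi-indices\<close>

lemma multi_indices_eq:
  "multi_indices k n = {is. length is = n \<and> (\<forall>m\<in>set is. k < m) \<and> successively (\<noteq>) is}"
  by (auto simp: multi_indices_def successively_conv_nth)

lemma multi_indices_snoc:
  assumes "2 \<le> n"
  shows "multi_indices k n
         = (\<lambda>(js, m). js @ [m]) ` (SIGMA js:multi_indices k (n - 1). {m. k < m \<and> m \<noteq> last js})"
proof (intro equalityI subsetI)
  fix xs assume xs: "xs \<in> multi_indices k n"
  then have "xs \<noteq> []"
    using assms by (auto simp: multi_indices_eq)
  then obtain js m where "xs = js @ [m]"
    by (metis rev_exhaust)
  with xs assms show "xs \<in> (\<lambda>(js, m). js @ [m]) ` (SIGMA js:multi_indices k (n - 1). {m. k < m \<and> m \<noteq> last js})"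
    by (force simp: multi_indices_eq successively_append_iff)
next
  fix xs assume "xs \<in> (\<lambda>(js, m). js @ [m]) ` (SIGMA js:multi_indices k (n - 1). {m. k < m \<and> m \<noteq> last js})"
  with assms show "xs \<in> multi_indices k n"
    by (force simp: multi_indices_eq successively_append_iff)
qed

lemma infsum_cmult_ennreal:
  fixes f :: "'a \<Rightarrow> ennreal"
  assumes "a < top"
  shows "infsum (\<lambda>x. a * f x) A = a * infsum f A"
proof -
  have "((\<lambda>F. sum f F) \<longlongrightarrow> infsum f A) (finite_subsets_at_top A)"
    using has_sum_infsum[of f A] by (simp add: has_sum_def nonneg_summable_on_complete)
  then have "((\<lambda>F. a * sum f F) \<longlongrightarrow> a * infsum f A) (finite_subsets_at_top A)"
    by (rule ennreal_tendsto_cmult[OF assms])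
  then have "((\<lambda>x. a * f x) has_sum (a * infsum f A)) A"
    by (simp add: has_sum_def sum_distrib_left)
  then show ?thesis
    by (rule infsumI)
qed

lemma infsum_le_of_weights_ennreal:
  fixes f w :: "'a \<Rightarrow> ennreal"
  assumes "\<And>x. x \<in> B \<Longrightarrow> f x \<le> a * w x" and "infsum w B \<le> 1" and "a < top"
  shows "infsum f B \<le> a"
proof -
  have "infsum f B \<le> infsum (\<lambda>x. a * w x) B"
    using assms(1) by (intro infsum_mono) (auto simp: nonneg_summable_on_complete)
  also have "\<dots> = a * infsum w B"
    using assms(3) by (rule infsum_cmult_ennreal)
  also have "\<dots> \<le> a * 1"
    using assms(2) by (intro mult_left_mono) auto
  finally show ?thesis
    by simp
qed

lemma sum_le_infsum_ennreal:
  fixes g :: "'a \<Rightarrow> ennreal"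
  assumes "finite F" "F \<subseteq> A"
  shows "sum g F \<le> infsum g A"
  using assms by (auto simp: nonneg_infsum_complete intro!: SUP_upper)

lemma infsum_Sigma_le_ennreal:
  fixes g :: "'a \<times> 'b \<Rightarrow> ennreal"
  shows "infsum g (Sigma A B) \<le> infsum (\<lambda>x. infsum (\<lambda>y. g (x, y)) (B x)) A"
proof -
  have "infsum g (Sigma A B) = (SUP F\<in>{F. finite F \<and> F \<subseteq> Sigma A B}. sum g F)"
    by (rule nonneg_infsum_complete) simp
  also have "\<dots> \<le> infsum (\<lambda>x. infsum (\<lambda>y. g (x, y)) (B x)) A"
  proof (rule SUP_least)
    fix F assume "F \<in> {F. finite F \<and> F \<subseteq> Sigma A B}"
    then have F: "finite F" "F \<subseteq> Sigma A B"
      by auto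
    define C where "C x = {y. (x, y) \<in> F}" for x
    have C: "finite (C x)" for x
    proof (rule finite_subset)
      show "C x \<subseteq> snd ` F"
        by (force simp: C_def)
    qed (use F in simp)
    have FC: "F = Sigma (fst ` F) C"
      by (force simp: C_def)
    have "sum g F = (\<Sum>x\<in>fst ` F. \<Sum>y\<in>C x. g (x, y))"
      by (subst FC, subst sum.Sigma) (use F C in auto)
    also have "\<dots> \<le> (\<Sum>x\<in>fst ` F. infsum (\<lambda>y. g (x, y)) (B x))"
      using F C by (intro sum_mono sum_le_infsum_ennreal) (auto simp: C_def)
    also have "\<dots> \<le> infsum (\<lambda>x. infsum (\<lambda>y. g (x, y)) (B x)) A"
      using F by (intro sum_le_infsum_ennreal) auto
    finally show "sum g F \<le> infsum (\<lambda>x. infsum (\<lambda>y. g (x, y)) (B x)) A" .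
  qed
  finally show ?thesis .
qed

lemma infsum_row_le_ennreal:
  fixes g :: "'a \<Rightarrow> 'b \<Rightarrow> ennreal"
  assumes "{x} \<times> B \<subseteq> S"
  shows "infsum (g x) B \<le> (\<Sum>\<^sub>\<infinity>(y, z)\<in>S. g y z)"
proof -
  have "infsum (g x) B = (\<Sum>\<^sub>\<infinity>(y, z)\<in>Pair x ` B. g y z)"
    by (subst infsum_reindex) (auto simp: inj_on_def o_def)
  also have "\<dots> \<le> (\<Sum>\<^sub>\<infinity>(y, z)\<in>S. g y z)"
    using assms by (intro infsum_mono_neutral) (auto simp: nonneg_summable_on_complete)
  finally show ?thesis .
qed

lemma infsum_multi_indices_le:
  fixes g :: "nat list \<Rightarrow> ennreal"
  assumes n: "2 \<le> n"
    and ext: "\<And>js. js \<in> multi_indices k (n - 1) \<Longrightarrow>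
                (\<Sum>\<^sub>\<infinity>m\<in>{m. k < m \<and> m \<noteq> last js}. g (js @ [m])) \<le> g js"
  shows "infsum g (multi_indices k n) \<le> infsum g (multi_indices k (n - 1))"
proof -
  let ?S = "SIGMA js:multi_indices k (n - 1). {m. k < m \<and> m \<noteq> last js}"
  have "infsum g (multi_indices k n) = infsum (g \<circ> (\<lambda>(js, m). js @ [m])) ?S"
    unfolding multi_indices_snoc[OF n] by (rule infsum_reindex) (auto simp: inj_on_def)
  also have "\<dots> \<le> (\<Sum>\<^sub>\<infinity>js\<in>multi_indices k (n - 1). \<Sum>\<^sub>\<infinity>m\<in>{m. k < m \<and> m \<noteq> last js}. g (js @ [m]))"
    using infsum_Sigma_le_ennreal[of "g \<circ> (\<lambda>(js, m). js @ [m])"] by simp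
  also have "\<dots> \<le> infsum g (multi_indices k (n - 1))"
    using ext by (intro infsum_mono) (auto simp: nonneg_summable_on_complete)
  finally show ?thesis .
qed

lemma infsum_multi_radius_snoc_le:
  assumes radii: "\<And>i. k < i \<Longrightarrow> 0 < r i \<and> r i \<le> 1"
    and disjoint: "\<And>i j. k < i \<Longrightarrow> k < j \<Longrightarrow> i \<noteq> j \<Longrightarrow>
                     r i + r j < \<bar>real_of_int (c i) - real_of_int (c j)\<bar>"
    and sep: "\<And>i j. k < i \<Longrightarrow> k < j \<Longrightarrow> i \<noteq> j \<Longrightarrow> 1 < \<bar>c i - c j\<bar>"
    and "0 \<le> \<alpha>"
    and weights: "(\<Sum>\<^sub>\<infinity>(i, j)\<in>{(i, j). i \<noteq> j \<and> k < i \<and> k < j}.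
                  ennreal ((1 / (\<bar>real_of_int (c i - c j)\<bar> - 1)) powr (2 * \<alpha>))) \<le> 1"
    and js: "js \<noteq> []" "\<forall>i\<in>set js. k < i" "successively (\<noteq>) js"
  shows "(\<Sum>\<^sub>\<infinity>m\<in>{m. k < m \<and> m \<noteq> last js}. ennreal (multi_radius c r (js @ [m]) powr \<alpha>))
         \<le> ennreal (multi_radius c r js powr \<alpha>)"
proof -
  define j where "j = last js"
  define w where "w m = ennreal ((1 / (\<bar>real_of_int (c j - c m)\<bar> - 1)) powr (2 * \<alpha>))" for m
  define B where "B = {m. k < m \<and> m \<noteq> j}"
  have "k < j"
    using js by (simp add: j_def)
  have chain: "successively (\<lambda>i j. r i + r j < \<bar>real_of_int (c i) - real_of_int (c j)\<bar>) js"
    using js(2) by (intro successively_mono[OF js(3)] disjoint) auto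
  have row: "infsum w B \<le> 1"
  proof -
    have "infsum w B \<le> (\<Sum>\<^sub>\<infinity>(i, j)\<in>{(i, j). i \<noteq> j \<and> k < i \<and> k < j}.
                  ennreal ((1 / (\<bar>real_of_int (c i - c j)\<bar> - 1)) powr (2 * \<alpha>)))"
      unfolding w_def using \<open>k < j\<close> by (intro infsum_row_le_ennreal) (auto simp: B_def)
    then show ?thesis
      using weights by (rule order_trans)
  qed
  have bound: "ennreal (multi_radius c r (js @ [m]) powr \<alpha>) \<le> ennreal (multi_radius c r js powr \<alpha>) * w m"
    if "m \<in> B" for m
  proof -
    have "2 \<le> \<bar>c j - c m\<bar>"
      using sep[OF \<open>k < j\<close>, of m] that by (simp add: B_def)
    then have "2 \<le> \<bar>real_of_int (c j - c m)\<bar>"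
      by linarith
    moreover have "\<forall>i\<in>set (js @ [m]). 0 < r i \<and> r i \<le> 1"
      using radii js(2) that by (auto simp: B_def)
    ultimately have "multi_radius c r (js @ [m]) powr \<alpha>
                     \<le> multi_radius c r js powr \<alpha> * (1 / (\<bar>real_of_int (c j - c m)\<bar> - 1)) powr (2 * \<alpha>)"
      using multi_radius_snoc_powr_le chain js(1) \<open>0 \<le> \<alpha>\<close> by (simp add: j_def)
    then show ?thesis
      unfolding w_def by (subst ennreal_mult[symmetric]) (auto intro: ennreal_leI)
  qed
  have "infsum (\<lambda>m. ennreal (multi_radius c r (js @ [m]) powr \<alpha>)) B
        \<le> ennreal (multi_radius c r js powr \<alpha>)"
    using bound row ennreal_less_top by (rule infsum_le_of_weights_ennreal)
  then show ?thesis
    by (simp add: B_def j_def)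
qed

theorem lemma3p3:
  fixes c :: "nat \<Rightarrow> int" and r :: "nat \<Rightarrow> real" and k n :: nat and \<alpha> :: real
  assumes rpos: "\<And>i. i \<ge> 1 \<Longrightarrow> 0 < r i"
    and rle: "\<And>i. i \<ge> 1 \<Longrightarrow> r i \<le> 1"
    and disj: "\<And>i j. i \<ge> 1 \<Longrightarrow> j \<ge> 1 \<Longrightarrow> i \<noteq> j \<Longrightarrow>
                 cball (complex_of_real (of_int (c i))) (r i) \<inter>
                 cball (complex_of_real (of_int (c j))) (r j) = {}"
    and sep: "\<And>i j. i \<ge> 1 \<Longrightarrow> j \<ge> 1 \<Longrightarrow> i \<noteq> j \<Longrightarrow> \<bar>c i - c j\<bar> > 1"
    and alpha: "\<alpha> > 0"
    and hyp: "(\<Sum>\<^sub>\<infinity> (i, j) \<in> {(i, j). i \<noteq> j \<and> i > k \<and> j > k}.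
                 ennreal ((1 / (\<bar>real_of_int (c i - c j)\<bar> - 1)) powr (2 * \<alpha>))) \<le> 1"
    and n: "n \<ge> 2"
  shows "(\<Sum>\<^sub>\<infinity> is \<in> multi_indices k n. ennreal (multi_radius c r is powr \<alpha>))
         \<le> (\<Sum>\<^sub>\<infinity> js \<in> multi_indices k (n - 1). ennreal (multi_radius c r js powr \<alpha>))"
proof -
  have radii: "0 < r i \<and> r i \<le> 1" if "k < i" for i
    using rpos rle that by simp
  have disjoint: "r i + r j < \<bar>real_of_int (c i) - real_of_int (c j)\<bar>"
    if "k < i" "k < j" "i \<noteq> j" for i j
  proof -
    have "r i + r j < dist (complex_of_real (of_int (c i))) (complex_of_real (of_int (c j)))"
      using that by (intro disjoint_cballs_imp_dist_gt rpos disj) auto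
    then show ?thesis
      by (simp only: dist_of_real dist_real_def)
  qed
  have sep': "1 < \<bar>c i - c j\<bar>" if "k < i" "k < j" "i \<noteq> j" for i j
    using sep that by simp
  show ?thesis
  proof (rule infsum_multi_indices_le[OF n])
    fix js assume "js \<in> multi_indices k (n - 1)"
    then have "js \<noteq> []" "\<forall>i\<in>set js. k < i" "successively (\<noteq>) js"
      using n by (auto simp: multi_indices_eq)
    then show "(\<Sum>\<^sub>\<infinity>m\<in>{m. k < m \<and> m \<noteq> last js}. ennreal (multi_radius c r (js @ [m]) powr \<alpha>))
               \<le> ennreal (multi_radius c r js powr \<alpha>)"
      using infsum_multi_radius_snoc_le[OF radii disjoint sep' _ hyp] alpha by simp
  qed
qed

end
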